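(* Let $n\ge 1$ and let $s,t$ be nonnegative integers. Two players independently each open one cereal box per time step; each box contains one of $n$ coupon types, chosen uniformly at random and independently of everything else. The first player is currently missing $s$ of the $n$ coupon types and the second player is missing $t$ of them. Let $X_1(s)$ and $X_2(t)$ be the number of boxes the first, respectively second, player must open until they have all $n$ coupon types, and let $$M(s,t):=\mathbb{E}\left[\max\{X_1(s),X_2(t)\}\right].$$ Equivalently, $M$ is determined by $M(0,0)=0$, $M(s,t)=0$ if $s<0$ or $t<0$, and the recurrence $$M(s,t)=\tfrac{s}{n}\left(1-\tfrac{t}{n}\right)M(s-1,t)+\left(1-\tfrac{s}{n}\right)\tfrac{t}{n}M(s,t-1)+\tfrac{s}{n}\cdot\tfrac{t}{n}M(s-1,t-1)+\left(1-\tfrac{s}{n}\right)\left(1-\tfrac{t}{n}\right)M(s,t)+1.$$ Then $$M(s,t)=nH(s+t)-\frac{\left(H(s+t)-1\right)st}{(s+t)(s+t-1)}+o(1).$$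
   Context: $H(m)=\sum_{j=1}^m \frac1j$ denotes the $m$-th harmonic number. The term $o(1)$ denotes a quantity tending to $0$ as $n\to\infty$ with $s,t$ fixed. *)

theory Defs
  imports "HOL-Analysis.Analysis"
begin

text \<open>The function M is indexed by
  integers so that the boundary convention M(s,t) = 0 for s < 0 or t < 0 is literal.\<close>

definition coupon_rec :: "nat \<Rightarrow> (int \<Rightarrow> int \<Rightarrow> real) \<Rightarrow> bool" where
  "coupon_rec n M \<longleftrightarrow>
     M 0 0 = 0 \<and>
     (\<forall>s t. s < 0 \<or> t < 0 \<longrightarrow> M s t = 0) \<and>
     (\<forall>s t. 0 \<le> s \<and> s \<le> int n \<and> 0 \<le> t \<and> t \<le> int n \<and> (s, t) \<noteq> (0, 0) \<longrightarrow>
        M s t = (of_int s / real n) * (1 - of_int t / real n) * M (s - 1) t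
              + (1 - of_int s / real n) * (of_int t / real n) * M s (t - 1)
              + (of_int s / real n) * (of_int t / real n) * M (s - 1) (t - 1)
              + (1 - of_int s / real n) * (1 - of_int t / real n) * M s t
              + 1)"

end

theory Submission
  imports Defs
begin

text \<open>Solving the recurrence for M(s,t) expresses (s + t - st/n) M(s,t) through the values at
  (s-1,t), (s,t-1), (s-1,t-1) plus the inhomogeneity n. The candidate n H(s+t) - C(s,t) satisfies
  the same relation up to a term st/n times a constant: the order-n terms cancel because
  (s+t) (H(s+t) - H(s+t-1)) = 1, and the correction C(s,t) = st (H(k) - 1) / (k (k-1)), k = s+t,
  is exactly what cancels the order-1 terms. Hence the error obeys a recurrence whose inhomogeneity
  is O(1/n) and whose leading coefficient tends to s + t > 0, so it tends to 0 by induction on s + t.\<close>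

definition coupon_corr_coeff :: "nat \<Rightarrow> real" where
  "coupon_corr_coeff k = (harm k - 1) / (real k * (real k - 1))"

definition coupon_corr :: "nat \<Rightarrow> nat \<Rightarrow> real" where
  "coupon_corr s t = real s * real t * coupon_corr_coeff (s + t)"

definition coupon_approx :: "nat \<Rightarrow> nat \<Rightarrow> nat \<Rightarrow> real" where
  "coupon_approx n s t = real n * harm (s + t) - coupon_corr s t"

text \<open>Solving the recurrence of coupon_rec for M(s,t) turns it into coupon_op n M s t = n.
  At s = 0 the truncated s - 1 is harmless, as every term containing it has coefficient 0.\<close>

definition coupon_op :: "nat \<Rightarrow> (nat \<Rightarrow> nat \<Rightarrow> real) \<Rightarrow> nat \<Rightarrow> nat \<Rightarrow> real" where
  "coupon_op n f s t =
     (real s + real t - real s * real t / real n) * f s t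
     - real s * (1 - real t / real n) * f (s - 1) t
     - real t * (1 - real s / real n) * f s (t - 1)
     - real s * real t / real n * f (s - 1) (t - 1)"

lemma harm_Suc_real: "harm (Suc k) = (harm k :: real) + 1 / (real k + 1)"
  by (simp add: harm_Suc field_simps)

lemma coupon_corr_coeff_step:
  "real (k + 2) * coupon_corr_coeff (k + 2) + harm (k + 2)
     = real k * coupon_corr_coeff (k + 1) + 2 * harm (k + 1) - harm k"
proof -
  have c2: "real (k + 2) * coupon_corr_coeff (k + 2) = (harm (k + 2) - 1) / (real k + 1)"
  proof -
    have "real (k + 2) * (real (k + 2) - 1) = real (k + 2) * (real k + 1)"
      by simp
    then show ?thesis
      unfolding coupon_corr_coeff_def by (simp del: of_nat_add)
  qed
  have c1: "real k * coupon_corr_coeff (k + 1) = (harm (k + 1) - 1) / (real k + 1)"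
  proof (cases "k = 0")
    case False
    have "real (k + 1) * (real (k + 1) - 1) = real k * (real k + 1)"
      by simp
    then show ?thesis
      using False unfolding coupon_corr_coeff_def by (simp del: of_nat_add)
  qed (simp add: harm_expand)
  show ?thesis
    using harm_Suc_real[of k] harm_Suc_real[of "k + 1"]
    unfolding c1 c2 by (simp add: field_simps)
qed

lemma coupon_op_diff:
  "coupon_op n (\<lambda>s t. f s t - g s t) s t = coupon_op n f s t - coupon_op n g s t"
  by (simp add: coupon_op_def right_diff_distrib)

lemma coupon_op_approx:
  assumes "n > 0" "s + t > 0"
  shows "coupon_op n (coupon_approx n) s t = real n + real s * real t / real n *
     (coupon_corr s t - coupon_corr (s - 1) t - coupon_corr s (t - 1) + coupon_corr (s - 1) (t - 1))"
proof (cases "s = 0 \<or> t = 0")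
  case True
  have harm_step: "real m * (harm m - harm (m - 1)) = (1 :: real)" if "m > 0" for m
    using that harm_Suc_real[of "m - 1"] by (simp add: field_simps)
  from True show ?thesis
    using harm_step[OF assms(2)] assms(1)
    by (auto simp: coupon_op_def coupon_approx_def coupon_corr_def algebra_simps)
next
  case False
  then obtain a b where ab: "s = Suc a" "t = Suc b"
    by (meson not0_implies_Suc)
  define k where "k = a + b"
  have idx: "s + t = k + 2" "s - 1 + t = k + 1" "s + (t - 1) = k + 1" "s - 1 + (t - 1) = k"
    "real (s - 1) = real s - 1" "real (t - 1) = real t - 1"
    unfolding ab k_def by simp_all
  have sum: "real s + real t = real (k + 2)"
    unfolding ab k_def by simp
  have expand: "(x + y - x*y/N) * (N*h2 - x*y*c2) - x*(1 - y/N)*(N*h1 - (x-1)*y*c1)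
      - y*(1-x/N)*(N*h1 - x*(y-1)*c1) - x*y/N*(N*h0 - (x-1)*(y-1)*c0)
      - (N + x*y/N*(x*y*c2 - (x-1)*y*c1 - x*(y-1)*c1 + (x-1)*(y-1)*c0))
    = N*((x+y)*h2 - (x+y)*h1 - 1) - x*y*((x+y)*c2 + h2 - (x+y-2)*c1 - 2*h1 + h0)"
    if "N \<noteq> 0" for x y N h0 h1 h2 c0 c1 c2 :: real
    using that by (simp add: field_simps)
  have harm_step: "real (k + 2) * harm (k + 2) - real (k + 2) * harm (k + 1) - 1 = (0 :: real)"
    using harm_Suc_real[of "k + 1"] by (simp add: field_simps)
  have "coupon_op n (coupon_approx n) s t - (real n + real s * real t / real n *
     (coupon_corr s t - coupon_corr (s - 1) t - coupon_corr s (t - 1) + coupon_corr (s - 1) (t - 1)))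
    = real n * (real (k + 2) * harm (k + 2) - real (k + 2) * harm (k + 1) - 1)
      - real s * real t * (real (k + 2) * coupon_corr_coeff (k + 2) + harm (k + 2)
          - real k * coupon_corr_coeff (k + 1) - 2 * harm (k + 1) + harm k)"
    using expand[where N = "real n" and x = "real s" and y = "real t"] assms(1)
    unfolding coupon_op_def coupon_approx_def coupon_corr_def idx sum
    by (simp add: ab k_def)
  also have "\<dots> = 0"
    using harm_step coupon_corr_coeff_step[of k] by simp
  finally show ?thesis
    by simp
qed

lemma coupon_op_solution:
  assumes "coupon_rec n M" "n \<ge> 1" "s \<le> n" "t \<le> n" "s + t > 0"
  shows "coupon_op n (\<lambda>s t. M (int s) (int t)) s t = real n"
proof -
  have rec: "M (int s) (int t) =
          real s / real n * (1 - real t / real n) * M (int s - 1) (int t)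
        + (1 - real s / real n) * (real t / real n) * M (int s) (int t - 1)
        + real s / real n * (real t / real n) * M (int s - 1) (int t - 1)
        + (1 - real s / real n) * (1 - real t / real n) * M (int s) (int t)
        + 1"
    using assms(1)[unfolded coupon_rec_def, THEN conjunct2, THEN conjunct2, rule_format,
        of "int s" "int t"] assms(3-5)
    by simp
  have shift:
    "real s * (1 - real t / real n) * M (int (s - 1)) (int t)
       = real s * (1 - real t / real n) * M (int s - 1) (int t)"
    "real t * (1 - real s / real n) * M (int s) (int (t - 1))
       = real t * (1 - real s / real n) * M (int s) (int t - 1)"
    "real s * real t / real n * M (int (s - 1)) (int (t - 1))
       = real s * real t / real n * M (int s - 1) (int t - 1)"
    by (cases s; cases t; simp)+
  have solve: "(x + y - x*y/N) * m - x*(1 - y/N)*m1 - y*(1 - x/N)*m2 - x*y/N*m3 = N"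
    if "N \<noteq> 0"
      and "m = x/N*(1 - y/N)*m1 + (1 - x/N)*(y/N)*m2 + x/N*(y/N)*m3 + (1 - x/N)*(1 - y/N)*m + 1"
    for x y N m m1 m2 m3 :: real
  proof -
    have "(x + y - x*y/N) * m - x*(1 - y/N)*m1 - y*(1 - x/N)*m2 - x*y/N*m3 - N
      = N * (m - (x/N*(1 - y/N)*m1 + (1 - x/N)*(y/N)*m2 + x/N*(y/N)*m3 + (1 - x/N)*(1 - y/N)*m + 1))"
      using that(1) by (simp add: field_simps)
    with that(2) show ?thesis
      by simp
  qed
  show ?thesis
    using solve[OF _ rec] assms(2) unfolding coupon_op_def shift by simp
qed

lemma tendsto_zero_by_coupon_op:
  fixes f :: "nat \<Rightarrow> nat \<Rightarrow> nat \<Rightarrow> real"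
  assumes "s + t > 0"
    and left: "s > 0 \<Longrightarrow> (\<lambda>n. f n (s - 1) t) \<longlonglongrightarrow> 0"
    and down: "t > 0 \<Longrightarrow> (\<lambda>n. f n s (t - 1)) \<longlonglongrightarrow> 0"
    and diag: "s > 0 \<Longrightarrow> t > 0 \<Longrightarrow> (\<lambda>n. f n (s - 1) (t - 1)) \<longlonglongrightarrow> 0"
    and op: "(\<lambda>n. coupon_op n (f n) s t) \<longlonglongrightarrow> 0"
  shows "(\<lambda>n. f n s t) \<longlonglongrightarrow> 0"
proof -
  define d where "d n = real s + real t - real s * real t / real n" for n
  have d_lim: "d \<longlonglongrightarrow> real s + real t"
    unfolding d_def by (auto intro!: tendsto_eq_intros)
  have left': "(\<lambda>n. real s * (1 - real t / real n) * f n (s - 1) t) \<longlonglongrightarrow> 0"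
  proof (cases "s = 0")
    case False
    with left have "(\<lambda>n. f n (s - 1) t) \<longlonglongrightarrow> 0"
      by simp
    then show ?thesis
      by (auto intro!: tendsto_eq_intros)
  qed simp
  have down': "(\<lambda>n. real t * (1 - real s / real n) * f n s (t - 1)) \<longlonglongrightarrow> 0"
  proof (cases "t = 0")
    case False
    with down have "(\<lambda>n. f n s (t - 1)) \<longlonglongrightarrow> 0"
      by simp
    then show ?thesis
      by (auto intro!: tendsto_eq_intros)
  qed simp
  have diag': "(\<lambda>n. real s * real t / real n * f n (s - 1) (t - 1)) \<longlonglongrightarrow> 0"
  proof (cases "s = 0 \<or> t = 0")
    case False
    with diag have "(\<lambda>n. f n (s - 1) (t - 1)) \<longlonglongrightarrow> 0"
      by simp
    from tendsto_mult[OF lim_const_over_n this] show ?thesis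
      by simp
  qed auto
  have "(\<lambda>n. (coupon_op n (f n) s t + real s * (1 - real t / real n) * f n (s - 1) t
       + real t * (1 - real s / real n) * f n s (t - 1)
       + real s * real t / real n * f n (s - 1) (t - 1)) / d n) \<longlonglongrightarrow> (0 + 0 + 0 + 0) / (real s + real t)"
    using assms(1) by (intro tendsto_divide tendsto_add op left' down' diag' d_lim) (simp flip: of_nat_add)
  moreover have "\<forall>\<^sub>F n in sequentially. d n > 0"
    using order_tendstoD(1)[OF d_lim, of 0] assms(1) by (simp flip: of_nat_add)
  then have "\<forall>\<^sub>F n in sequentially. f n s t = (coupon_op n (f n) s t
       + real s * (1 - real t / real n) * f n (s - 1) t
       + real t * (1 - real s / real n) * f n s (t - 1)
       + real s * real t / real n * f n (s - 1) (t - 1)) / d n"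
    by eventually_elim (simp add: coupon_op_def d_def field_simps)
  ultimately show ?thesis
    by (simp add: Lim_transform_eventually eventually_mono)
qed

lemma coupon_error_tendsto_zero:
  fixes M :: "nat \<Rightarrow> int \<Rightarrow> int \<Rightarrow> real"
  assumes rec: "\<And>n. n \<ge> 1 \<Longrightarrow> coupon_rec n (M n)"
  shows "(\<lambda>n. M n (int s) (int t) - coupon_approx n s t) \<longlonglongrightarrow> 0"
proof -
  define E where "E n s t = M n (int s) (int t) - coupon_approx n s t" for n s t
  have "(\<lambda>n. E n s t) \<longlonglongrightarrow> 0" for s t
  proof (induction "s + t" arbitrary: s t rule: less_induct)
    case less
    show ?case
    proof (cases "s + t = 0")
      case True
      have "\<forall>\<^sub>F n in sequentially. E n s t = 0"
        using eventually_ge_at_top[of 1]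
      proof eventually_elim
        case (elim n)
        have "M n 0 0 = 0"
          using rec[OF elim] unfolding coupon_rec_def by blast
        with True show ?case
          by (simp add: E_def coupon_approx_def coupon_corr_def harm_expand)
      qed
      then show ?thesis
        by (simp add: tendsto_eventually)
    next
      case False
      define D where "D = coupon_corr s t - coupon_corr (s - 1) t - coupon_corr s (t - 1)
                           + coupon_corr (s - 1) (t - 1)"
      have "\<forall>\<^sub>F n in sequentially. - (real s * real t * D) / real n = coupon_op n (E n) s t"
        using eventually_ge_at_top[of "max 1 (max s t)"]
      proof eventually_elim
        case (elim n)
        then have n: "n \<ge> 1" "s \<le> n" "t \<le> n"
          by auto
        from False have pos: "s + t > 0"
          by simp
        have "coupon_op n (E n) s t
            = coupon_op n (\<lambda>s t. M n (int s) (int t)) s t - coupon_op n (coupon_approx n) s t"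
          unfolding E_def by (rule coupon_op_diff)
        also have "\<dots> = real n - (real n + real s * real t / real n * D)"
          using coupon_op_solution[OF rec[OF n(1)] n pos] coupon_op_approx[OF _ pos, of n] n(1)
          unfolding D_def by simp
        finally show ?case
          by simp
      qed
      then have "(\<lambda>n. coupon_op n (E n) s t) \<longlonglongrightarrow> 0"
        by (rule Lim_transform_eventually[OF lim_const_over_n])
      then show ?thesis
      proof (rule tendsto_zero_by_coupon_op[rotated 4])
        show "s + t > 0"
          using False by simp
        show "(\<lambda>n. E n (s - 1) t) \<longlonglongrightarrow> 0" if "s > 0"
          using less[of "s - 1" t] that by simp
        show "(\<lambda>n. E n s (t - 1)) \<longlonglongrightarrow> 0" if "t > 0"
          using less[of s "t - 1"] that by simp
        show "(\<lambda>n. E n (s - 1) (t - 1)) \<longlonglongrightarrow> 0" if "s > 0" "t > 0"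
          using less[of "s - 1" "t - 1"] that by simp
      qed
    qed
  qed
  then show ?thesis
    unfolding E_def .
qed

theorem mainTheorem1:
  fixes M :: "nat \<Rightarrow> int \<Rightarrow> int \<Rightarrow> real" and s t :: nat
  assumes "\<And>n. n \<ge> 1 \<Longrightarrow> coupon_rec n (M n)"
  shows "(\<lambda>n. M n (int s) (int t)
            - (real n * harm (s + t)
               - (harm (s + t) - 1) * real s * real t
                 / ((real s + real t) * (real s + real t - 1))))
         \<longlonglongrightarrow> 0"
proof -
  have "coupon_approx n s t = real n * harm (s + t)
      - (harm (s + t) - 1) * real s * real t / ((real s + real t) * (real s + real t - 1))" for n
    by (simp add: coupon_approx_def coupon_corr_def coupon_corr_coeff_def algebra_simps)
  then show ?thesis
    using coupon_error_tendsto_zero[OF assms, of s t] by simp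
qed

end
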